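(* Let $q\ge2$ and $n\ge1$. Every $2$-read $(n,5)_q$-code $\mathcal{C}\subseteq\Sigma_q^n$ satisfies $r(\mathcal{C})\ge\log_q((q-1)n+1)$.
   Context: $\Sigma_q=\{0,\dots,q-1\}$. For $\boldsymbol{x}\in\Sigma_q^n$, $x[i]$ is its $i$-th entry, with $x[i]=0$ for $i\notin[1,n]$; $\mathcal{R}(\boldsymbol{x})$ is the length-$(n+1)$ vector whose $i$-th entry is the multiset $\{\{x[i-1],x[i]\}\}$. $\mathcal{C}\subseteq\Sigma_q^n$ is a $2$-read $(n,d)_q$-code if $d_H(\mathcal{R}(\boldsymbol{x}),\mathcal{R}(\boldsymbol{y}))\ge d$ for all distinct $\boldsymbol{x},\boldsymbol{y}\in\mathcal{C}$ ($d_H$ = Hamming distance). Redundancy: $r(\mathcal{C})=n-\log_q|\mathcal{C}|$. *)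

theory Defs
  imports Complex_Main "HOL-Library.Multiset"
begin

text \<open>Words over Sigma_q = {0,...,q-1} of length n are lists of naturals.
  The entry x[i] (1-based), with x[i] = 0 for i outside [1,n].\<close>
definition entry :: "nat list \<Rightarrow> nat \<Rightarrow> nat" where
  "entry x i = (if 1 \<le> i \<and> i \<le> length x then x ! (i - 1) else 0)"

definition words :: "nat \<Rightarrow> nat \<Rightarrow> nat list set" where
  "words q n = {x. length x = n \<and> set x \<subseteq> {..<q}}"

definition read2 :: "nat list \<Rightarrow> nat multiset list" where
  "read2 x = map (\<lambda>i. {#entry x (i - 1), entry x i#}) [1..<length x + 2]"

definition hamming :: "'a list \<Rightarrow> 'a list \<Rightarrow> nat" where
  "hamming a b = card {i. i < length a \<and> a ! i \<noteq> b ! i}"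

definition two_read_code :: "nat \<Rightarrow> nat \<Rightarrow> nat \<Rightarrow> nat list set \<Rightarrow> bool" where
  "two_read_code q n d C \<longleftrightarrow> C \<subseteq> words q n \<and>
     (\<forall>x\<in>C. \<forall>y\<in>C. x \<noteq> y \<longrightarrow> hamming (read2 x) (read2 y) \<ge> d)"

definition redundancy :: "nat \<Rightarrow> nat \<Rightarrow> nat list set \<Rightarrow> real" where
  "redundancy q n C = real n - log (real q) (real (card C))"

end

theory Submission
  imports Defs
begin

text \<open>Changing one letter of x changes at most two consecutive entries of the 2-read vector
  R(x), so d(R(x), R(y)) \<le> 2 d(x, y). Hence a 2-read code of read distance 5 has Hamming
  distance at least 3, its Hamming balls of radius 1 are pairwise disjoint, and each such ball
  contains (q - 1) n + 1 words. Comparing with the q^n words of length n gives the bound.\<close>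

definition mismatches :: "'a list \<Rightarrow> 'a list \<Rightarrow> nat set" where
  "mismatches a b = {i. i < length a \<and> a ! i \<noteq> b ! i}"

lemma hamming_eq_card_mismatches: "hamming a b = card (mismatches a b)"
  unfolding hamming_def mismatches_def ..

lemma finite_mismatches: "finite (mismatches a b)"
  unfolding mismatches_def by simp

lemma hamming_commute:
  assumes "length a = length b"
  shows "hamming a b = hamming b a"
  unfolding hamming_def using assms by metis

lemma hamming_triangle:
  assumes "length a = length b"
  shows "hamming a c \<le> hamming a b + hamming b c"
proof -
  have "mismatches a c \<subseteq> mismatches a b \<union> mismatches b c"
    using assms unfolding mismatches_def by auto
  then have "hamming a c \<le> card (mismatches a b \<union> mismatches b c)"
    unfolding hamming_eq_card_mismatches by (intro card_mono) (simp_all add: finite_mismatches)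
  also have "\<dots> \<le> hamming a b + hamming b c"
    unfolding hamming_eq_card_mismatches by (rule card_Un_le)
  finally show ?thesis .
qed

lemma hamming_list_update_le: "hamming x (x[i := a]) \<le> 1"
proof -
  have "k = i" if "x ! k \<noteq> x[i := a] ! k" for k
    using that by (cases "k = i") simp_all
  then have "mismatches x (x[i := a]) \<subseteq> {i}"
    unfolding mismatches_def by blast
  then show ?thesis
    unfolding hamming_eq_card_mismatches using card_mono[of "{i}"] by fastforce
qed

lemma length_read2: "length (read2 x) = length x + 1"
  unfolding read2_def by (simp del: upt_Suc)

lemma read2_nth:
  assumes "i < length x + 1"
  shows "read2 x ! i = {#entry x i, entry x (Suc i)#}"
  using assms unfolding read2_def by (simp del: upt_Suc)

lemma entry_neq_imp_Suc_mismatch: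
  assumes "entry x j \<noteq> entry y j" "length x = length y"
  shows "j \<in> Suc ` mismatches x y"
  using assms unfolding entry_def mismatches_def
  by (auto split: if_splits intro!: image_eqI[of j Suc "j - 1"])

lemma hamming_read2_le:
  assumes "length x = length y"
  shows "hamming (read2 x) (read2 y) \<le> 2 * hamming x y"
proof -
  let ?D = "mismatches x y"
  have "mismatches (read2 x) (read2 y) \<subseteq> Suc ` ?D \<union> ?D"
  proof (clarify)
    fix i assume "i \<in> mismatches (read2 x) (read2 y)" and "i \<notin> ?D"
    then have i: "i < length x + 1" and neq: "read2 x ! i \<noteq> read2 y ! i"
      unfolding mismatches_def length_read2 by simp_all
    with assms have "{#entry x i, entry x (Suc i)#} \<noteq> {#entry y i, entry y (Suc i)#}"
      by (simp add: read2_nth)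
    then consider "entry x i \<noteq> entry y i" | "entry x (Suc i) \<noteq> entry y (Suc i)"
      by force
    then show "i \<in> Suc ` ?D"
    proof cases
      case 1
      then show ?thesis using entry_neq_imp_Suc_mismatch[OF _ assms] by blast
    next
      case 2
      then have "Suc i \<in> Suc ` ?D" using entry_neq_imp_Suc_mismatch[OF _ assms] by blast
      with \<open>i \<notin> ?D\<close> show ?thesis by blast
    qed
  qed
  then have "hamming (read2 x) (read2 y) \<le> card (Suc ` ?D \<union> ?D)"
    unfolding hamming_eq_card_mismatches by (intro card_mono) (simp_all add: finite_mismatches)
  also have "\<dots> \<le> card (Suc ` ?D) + card ?D" by (rule card_Un_le)
  also have "\<dots> \<le> 2 * card ?D" using card_image_le[OF finite_mismatches, of Suc x y] by simp
  finally show ?thesis unfolding hamming_eq_card_mismatches .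
qed

lemma two_read_code_hamming_distance:
  assumes "two_read_code q n d C" "x \<in> C" "y \<in> C" "x \<noteq> y"
  shows "d \<le> 2 * hamming x y"
proof -
  have "length x = length y" using assms unfolding two_read_code_def words_def by auto
  then show ?thesis
    using assms hamming_read2_le unfolding two_read_code_def by (meson order_trans)
qed

lemma words_eq_lists: "words q n = {xs. set xs \<subseteq> {..<q} \<and> length xs = n}"
  unfolding words_def by auto

lemma finite_words: "finite (words q n)"
  unfolding words_eq_lists by (simp add: finite_lists_length_eq)

lemma card_words: "card (words q n) = q ^ n"
  unfolding words_eq_lists by (simp add: card_lists_length_eq)

definition substitutions :: "nat \<Rightarrow> nat list \<Rightarrow> (nat \<times> nat) set" where
  "substitutions q x = (SIGMA i:{..<length x}. {..<q} - {x ! i})"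

definition ball1 :: "nat \<Rightarrow> nat list \<Rightarrow> nat list set" where
  "ball1 q x = insert x ((\<lambda>(i, a). x[i := a]) ` substitutions q x)"

lemma finite_substitutions: "finite (substitutions q x)"
  unfolding substitutions_def by simp

lemma finite_ball1: "finite (ball1 q x)"
  unfolding ball1_def by (simp add: finite_substitutions)

lemma card_substitutions:
  assumes "x \<in> words q n"
  shows "card (substitutions q x) = (q - 1) * n"
proof -
  have "card ({..<q} - {x ! i}) = q - 1" if "i < length x" for i
  proof -
    have "x ! i < q" using assms nth_mem[OF that] unfolding words_def by auto
    then show ?thesis by simp
  qed
  then show ?thesis
    using assms unfolding substitutions_def words_def by (simp add: card_SigmaI)
qed

lemma inj_on_substitutions: "inj_on (\<lambda>(i, a). x[i := a]) (substitutions q x)"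
proof (rule inj_onI, clarify)
  fix i a j b
  assume ia: "(i, a) \<in> substitutions q x" and eq: "x[i := a] = x[j := b]"
  have "i = j"
  proof (rule ccontr)
    assume "i \<noteq> j"
    then have "x[i := a] ! i = x ! i" using eq by simp
    with ia show False unfolding substitutions_def by simp
  qed
  with eq ia show "i = j \<and> a = b"
    unfolding substitutions_def by (metis SigmaD1 lessThan_iff nth_list_update_eq)
qed

lemma card_ball1:
  assumes "x \<in> words q n"
  shows "card (ball1 q x) = (q - 1) * n + 1"
proof -
  have "x \<notin> (\<lambda>(i, a). x[i := a]) ` substitutions q x"
    unfolding substitutions_def by (auto simp: list_update_same_conv dest: sym)
  then have "card (ball1 q x) = card (substitutions q x) + 1"
    unfolding ball1_def using finite_substitutions inj_on_substitutions
    by (simp add: card_image)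
  with card_substitutions[OF assms] show ?thesis by simp
qed

lemma ball1_subset_words:
  assumes "x \<in> words q n"
  shows "ball1 q x \<subseteq> words q n"
  using assms unfolding ball1_def words_def substitutions_def
  by (auto dest!: set_update_subset_insert[THEN subsetD])

lemma hamming_ball1:
  assumes "z \<in> ball1 q x"
  shows "length z = length x" "hamming x z \<le> 1"
  using assms hamming_list_update_le unfolding ball1_def hamming_def by auto

lemma ball1_disjoint:
  assumes "3 \<le> hamming x y"
  shows "ball1 q x \<inter> ball1 q y = {}"
proof (rule ccontr)
  assume "ball1 q x \<inter> ball1 q y \<noteq> {}"
  then obtain z where zx: "z \<in> ball1 q x" and zy: "z \<in> ball1 q y" by blast
  have "hamming x y \<le> hamming x z + hamming z y"
    using hamming_ball1(1)[OF zx] by (intro hamming_triangle) simp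
  also have "hamming z y = hamming y z"
    using hamming_ball1(1)[OF zy] by (rule hamming_commute)
  finally show False
    using hamming_ball1(2)[OF zx] hamming_ball1(2)[OF zy] assms by linarith
qed

lemma sphere_packing_bound:
  assumes "C \<subseteq> words q n"
    and "\<And>x y. x \<in> C \<Longrightarrow> y \<in> C \<Longrightarrow> x \<noteq> y \<Longrightarrow> 3 \<le> hamming x y"
  shows "card C * ((q - 1) * n + 1) \<le> q ^ n"
proof -
  have "finite C" using assms(1) finite_words by (rule finite_subset)
  have "card C * ((q - 1) * n + 1) = (\<Sum>x\<in>C. card (ball1 q x))"
    using assms(1) by (simp add: card_ball1[where n = n] subset_iff del: One_nat_def)
  also have "\<dots> = card (\<Union>x\<in>C. ball1 q x)"
  proof (rule card_UN_disjoint[symmetric])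
    show "\<forall>x\<in>C. \<forall>y\<in>C. x \<noteq> y \<longrightarrow> ball1 q x \<inter> ball1 q y = {}"
      using assms(2) ball1_disjoint by blast
  qed (simp_all add: \<open>finite C\<close> finite_ball1)
  also have "\<dots> \<le> card (words q n)"
    using assms(1) ball1_subset_words by (intro card_mono finite_words) blast
  finally show ?thesis by (simp only: card_words)
qed

text \<open>The hypothesis m \<le> b^n is needed for k = 0 (an empty code), where log b 0 = 0.\<close>

lemma log_le_diff_log:
  fixes b k m :: real
  assumes "1 < b" "0 < m" "m \<le> b ^ n" "0 \<le> k" "k * m \<le> b ^ n"
  shows "log b m \<le> n - log b k"
proof (cases "k = 0")
  case True
  have "log b m \<le> log b (b ^ n)" using assms by (subst log_le_cancel_iff) auto
  moreover have "log b k = 0" using True by (simp add: log_def)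
  ultimately show ?thesis using assms(1) by (simp add: log_nat_power)
next
  case False
  with assms have "log b k + log b m = log b (k * m)" by (simp add: log_mult)
  also have "\<dots> \<le> log b (b ^ n)" using assms False by (subst log_le_cancel_iff) auto
  finally show ?thesis using assms(1) by (simp add: log_nat_power)
qed

theorem theorem11:
  fixes q n :: nat and C :: "nat list set"
  assumes "q \<ge> 2" and "n \<ge> 1"
    and "two_read_code q n 5 C"
  shows "redundancy q n C \<ge> log (real q) (real ((q - 1) * n + 1))"
proof -
  have "C \<subseteq> words q n" using assms(3) unfolding two_read_code_def by blast
  moreover have "3 \<le> hamming x y" if "x \<in> C" "y \<in> C" "x \<noteq> y" for x y
    using two_read_code_hamming_distance[OF assms(3) that] by linarith
  ultimately have "card C * ((q - 1) * n + 1) \<le> q ^ n"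
    by (rule sphere_packing_bound)
  then have code: "real (card C) * real ((q - 1) * n + 1) \<le> real q ^ n"
    by (metis of_nat_le_iff of_nat_mult of_nat_power)
  have "card {replicate n (0::nat)} * ((q - 1) * n + 1) \<le> q ^ n"
  proof (rule sphere_packing_bound)
    show "{replicate n (0::nat)} \<subseteq> words q n" using assms(1) by (auto simp: words_def)
  qed simp
  then have "(q - 1) * n + 1 \<le> q ^ n" by simp
  then have ball: "real ((q - 1) * n + 1) \<le> real q ^ n"
    by (metis of_nat_le_iff of_nat_power)
  have "0 < real ((q - 1) * n + 1)" by (simp only: of_nat_0_less_iff)
  with assms(1) have "log q ((q - 1) * n + 1) \<le> n - log q (card C)"
    by (intro log_le_diff_log[OF _ _ ball _ code]) simp_all
  then show ?thesis unfolding redundancy_def by simp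
qed

end
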